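(* Let $[\alpha]_{K\times K}\in\mathcal A_{\mathrm{SLS}}$, let $\pi_1,\dots,\pi_n$ ($n>1$) be disjoint cycles, and let $\pi_{1,2,\dots,n}=(\pi_1\to\pi_2\to\cdots\to\pi_n)$ be their combination. Then $$\Delta_{\pi_{1,2,\dots,n}}\le\Delta_{\pi_1}+\cdots+\Delta_{\pi_n}+\Delta_\pi,\qquad\text{where }\pi=(\pi_1(1)\to\pi_2(1)\to\cdots\to\pi_n(1)).$$
   Context: SLS regime: $\mathcal A_{\mathrm{SLS}}=\{[\alpha]\in\mathbb R_+^{K\times K}:\ \alpha_{ii}\ge\max(\alpha_{ij},\alpha_{ki},\alpha_{ik}+\alpha_{ji}-\alpha_{jk})\ \forall i,j,k\in[K],\ i\notin\{j,k\}\}$. Cycles: a cycle $\pi=(i_1\to\cdots\to i_M)$, $M\ge1$, is an ordered list of distinct indices of $[K]$, read cyclically ($i_{M+1}=i_1$); $\pi(m)=i_m$, in particular $\pi(1)=i_1$ is the head; $\{\pi\}=\{i_1,\dots,i_M\}$; cycles are disjoint if their sets are disjoint. For disjoint cycles $\pi_1=(i_{1,1}\to\cdots\to i_{1,m_1}),\dots,\pi_n=(i_{n,1}\to\cdots\to i_{n,m_n})$, the combined cycle is $(\pi_1\to\cdots\to\pi_n)=(i_{1,1}\to\cdots\to i_{1,m_1}\to i_{2,1}\to\cdots\to i_{2,m_2}\to\cdots\to i_{n,m_n})$. $\delta_{ij}=\alpha_{ii}-\alpha_{ji}$ ($i\neq j$), $\delta_{ii}=0$; $\Delta_\pi=\sum_{m=1}^M\delta_{i_mi_{m+1}}$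 if $M>1$, $\Delta_\pi=\alpha_{i_1i_1}$ if $M=1$. *)

theory Defs
  imports Complex_Main
begin

text \<open>Indices of [K] are rendered as {0..<K}; the matrix alpha as a function nat => nat => real,
  only its entries on [K] x [K] being relevant.\<close>

definition SLS :: "nat \<Rightarrow> (nat \<Rightarrow> nat \<Rightarrow> real) \<Rightarrow> bool" where
  "SLS K \<alpha> \<longleftrightarrow>
     (\<forall>i<K. \<forall>j<K. \<alpha> i j \<ge> 0) \<and>
     (\<forall>i<K. \<forall>j<K. \<forall>k<K. i \<noteq> j \<and> i \<noteq> k \<longrightarrow>
        \<alpha> i i \<ge> max (\<alpha> i j) (max (\<alpha> k i) (\<alpha> i k + \<alpha> j i - \<alpha> j k)))"

text \<open>A cycle is a nonempty list of distinct indices of [K], read cyclically; its head is hd.\<close>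
definition is_cycle :: "nat \<Rightarrow> nat list \<Rightarrow> bool" where
  "is_cycle K c \<longleftrightarrow> c \<noteq> [] \<and> distinct c \<and> set c \<subseteq> {0..<K}"

definition delta :: "(nat \<Rightarrow> nat \<Rightarrow> real) \<Rightarrow> nat \<Rightarrow> nat \<Rightarrow> real" where
  "delta \<alpha> i j = (if i = j then 0 else \<alpha> i i - \<alpha> j i)"

definition Delta :: "(nat \<Rightarrow> nat \<Rightarrow> real) \<Rightarrow> nat list \<Rightarrow> real" where
  "Delta \<alpha> c = (if length c = 1 then \<alpha> (c!0) (c!0)
     else (\<Sum>m<length c. delta \<alpha> (c!m) (c!((m+1) mod length c))))"

definition combine :: "nat list list \<Rightarrow> nat list" where
  "combine ps = concat ps"

end

theory Submission
  imports Defs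
begin

text \<open>Cut the combined cycle at the boundaries between the \<open>\<pi>\<^sub>a\<close>: it consists of the paths inside
  each \<open>\<pi>\<^sub>a\<close> plus, for each \<open>a\<close>, a jump from the last vertex of \<open>\<pi>\<^sub>a\<close> to the head of the next cycle.
  The SLS inequality \<open>\<alpha>\<^sub>i\<^sub>i \<ge> \<alpha>\<^sub>i\<^sub>k + \<alpha>\<^sub>j\<^sub>i - \<alpha>\<^sub>j\<^sub>k\<close> is exactly the triangle inequality
  \<open>\<delta>\<^sub>k\<^sub>j \<le> \<delta>\<^sub>k\<^sub>i + \<delta>\<^sub>i\<^sub>j\<close>, so each jump is bounded by the detour through the head of \<open>\<pi>\<^sub>a\<close>.
  The first leg of the detour closes the cycle \<open>\<pi>\<^sub>a\<close>; the second is an edge of the cycle of heads.\<close>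

definition cyclic_sum :: "('a \<Rightarrow> 'a \<Rightarrow> real) \<Rightarrow> 'a list \<Rightarrow> real" where
  "cyclic_sum e xs = (\<Sum>m<length xs. e (xs!m) (xs!((m+1) mod length xs)))"

fun path_sum :: "('a \<Rightarrow> 'a \<Rightarrow> real) \<Rightarrow> 'a list \<Rightarrow> real" where
  "path_sum e (x#y#r) = e x y + path_sum e (y#r)"
| "path_sum e _ = 0"

lemma path_sum_conv_sum_nth: "path_sum e xs = (\<Sum>m<length xs - 1. e (xs!m) (xs!Suc m))"
proof (induction e xs rule: path_sum.induct)
  case (1 e x y r)
  have "(\<Sum>m<length (x#y#r) - 1. e ((x#y#r)!m) ((x#y#r)!Suc m))
      = e x y + (\<Sum>m<length r. e ((y#r)!m) ((y#r)!Suc m))"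
    by (simp add: sum.lessThan_Suc_shift del: sum.lessThan_Suc)
  then show ?case using 1 by simp
qed auto

lemma path_sum_append:
  "xs \<noteq> [] \<Longrightarrow> ys \<noteq> [] \<Longrightarrow>
   path_sum e (xs @ ys) = path_sum e xs + e (last xs) (hd ys) + path_sum e ys"
proof (induction xs)
  case (Cons x xs)
  show ?case
  proof (cases xs)
    case Nil
    then show ?thesis using Cons.prems by (cases ys) auto
  qed (use Cons in simp)
qed simp

lemma path_sum_concat:
  "\<forall>p\<in>set ps. p \<noteq> [] \<Longrightarrow>
   path_sum e (concat ps) = (\<Sum>p\<leftarrow>ps. path_sum e p) + path_sum (\<lambda>p q. e (last p) (hd q)) ps"
proof (induction "\<lambda>p q. e (last p) (hd q)" ps rule: path_sum.induct)
  case (1 p q r)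
  have "concat (q#r) \<noteq> []" "hd (concat (q#r)) = hd q" using "1.prems" by auto
  then show ?case using 1 path_sum_append[of p "concat (q#r)" e] by simp
qed auto

lemma length_le_length_concat: "\<forall>p\<in>set ps. p \<noteq> [] \<Longrightarrow> length ps \<le> length (concat ps)"
  by (induction ps) (auto simp: Suc_le_eq length_greater_0_conv[symmetric] simp del: length_greater_0_conv)

lemma cyclic_sum_eq_path_sum:
  assumes "xs \<noteq> []"
  shows "cyclic_sum e xs = path_sum e xs + e (last xs) (hd xs)"
proof -
  obtain k where k: "length xs = Suc k" using assms by (cases xs) auto
  have "cyclic_sum e xs = (\<Sum>m<k. e (xs!m) (xs!Suc m)) + e (xs!k) (xs!0)"
    unfolding cyclic_sum_def k by (auto intro!: sum.cong)
  then show ?thesis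
    using assms k by (simp add: path_sum_conv_sum_nth last_conv_nth hd_conv_nth)
qed

lemma cyclic_sum_concat:
  assumes "ps \<noteq> []" and "\<forall>p\<in>set ps. p \<noteq> []"
  shows "cyclic_sum e (concat ps)
           = (\<Sum>p\<leftarrow>ps. path_sum e p) + cyclic_sum (\<lambda>p q. e (last p) (hd q)) ps"
proof -
  have "concat ps \<noteq> []" "last (concat ps) = last (last ps)" "hd (concat ps) = hd (hd ps)"
    using assms by (induction ps) (auto simp: last_append intro!: hd_append2)
  then show ?thesis
    using assms by (simp add: cyclic_sum_eq_path_sum path_sum_concat)
qed

lemma cyclic_sum_map: "cyclic_sum e (map f xs) = cyclic_sum (\<lambda>x y. e (f x) (f y)) xs"
proof -
  have "m < length xs \<Longrightarrow> (m + 1) mod length xs < length xs" for m by (auto intro: mod_less_divisor)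
  then show ?thesis by (auto simp: cyclic_sum_def intro!: sum.cong)
qed

lemma cyclic_sum_le_detour:
  assumes "\<And>m. m < length xs \<Longrightarrow>
             e (xs!m) (xs!((m+1) mod length xs)) \<le> g (xs!m) + f (xs!m) (xs!((m+1) mod length xs))"
  shows "cyclic_sum e xs \<le> (\<Sum>x\<leftarrow>xs. g x) + cyclic_sum f xs"
proof -
  have "cyclic_sum e xs \<le> (\<Sum>m<length xs. g (xs!m) + f (xs!m) (xs!((m+1) mod length xs)))"
    unfolding cyclic_sum_def using assms by (intro sum_mono) auto
  then show ?thesis
    by (simp add: sum.distrib cyclic_sum_def sum_list_sum_nth atLeast0LessThan)
qed

lemma delta_triangle:
  assumes "SLS K \<alpha>" and "i < K" "j < K" "k < K" and "j \<noteq> i" "j \<noteq> k"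
  shows "delta \<alpha> k j \<le> delta \<alpha> k i + delta \<alpha> i j"
proof (cases "k = i")
  case False
  then have "\<alpha> i i \<ge> \<alpha> i k + \<alpha> j i - \<alpha> j k"
    using assms unfolding SLS_def by (metis max.bounded_iff)
  then show ?thesis using False assms(5,6) by (simp add: delta_def)
qed (use assms in \<open>simp add: delta_def\<close>)

lemma jump_le_detour:
  assumes "SLS K \<alpha>" and "is_cycle K p" "is_cycle K q" and "set p \<inter> set q = {}"
  shows "delta \<alpha> (last p) (hd q) \<le> delta \<alpha> (last p) (hd p) + delta \<alpha> (hd p) (hd q)"
proof (rule delta_triangle[OF assms(1)])
  have "hd p \<in> set p" "last p \<in> set p" "hd q \<in> set q"
    using assms(2,3) by (simp_all add: is_cycle_def)
  with assms(2-4) show "hd p < K" "hd q < K" "last p < K" "hd q \<noteq> hd p" "hd q \<noteq> last p"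
    unfolding is_cycle_def by (metis atLeastLessThan_iff disjoint_iff subsetD)+
qed

lemma cyclic_sum_le_Delta:
  assumes "SLS K \<alpha>" and "is_cycle K c"
  shows "cyclic_sum (delta \<alpha>) c \<le> Delta \<alpha> c"
proof (cases "length c = 1")
  case True
  then obtain x where "c = [x]" by (cases c) auto
  with assms show ?thesis by (auto simp: SLS_def is_cycle_def cyclic_sum_def Delta_def delta_def)
qed (simp add: Delta_def cyclic_sum_def)

theorem lemma6:
  fixes K :: nat and \<alpha> :: "nat \<Rightarrow> nat \<Rightarrow> real" and ps :: "nat list list"
  assumes "SLS K \<alpha>"
    and "length ps > 1"
    and "\<forall>c\<in>set ps. is_cycle K c"
    and "\<forall>a<length ps. \<forall>b<length ps. a \<noteq> b \<longrightarrow> set (ps!a) \<inter> set (ps!b) = {}"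
  shows "Delta \<alpha> (combine ps) \<le> (\<Sum>a<length ps. Delta \<alpha> (ps!a)) + Delta \<alpha> (map hd ps)"
proof -
  have nonempty: "\<forall>p\<in>set ps. p \<noteq> []" using assms(3) by (auto simp: is_cycle_def)
  have "length ps \<le> length (concat ps)"
    using nonempty by (rule length_le_length_concat)
  then have "Delta \<alpha> (combine ps) = cyclic_sum (delta \<alpha>) (concat ps)"
    using assms(2) by (simp add: Delta_def cyclic_sum_def combine_def)
  also have "\<dots> = (\<Sum>p\<leftarrow>ps. path_sum (delta \<alpha>) p)
                   + cyclic_sum (\<lambda>p q. delta \<alpha> (last p) (hd q)) ps"
    using assms(2) nonempty by (intro cyclic_sum_concat) auto
  also have "\<dots> \<le> (\<Sum>p\<leftarrow>ps. path_sum (delta \<alpha>) p)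
                   + ((\<Sum>p\<leftarrow>ps. delta \<alpha> (last p) (hd p)) + cyclic_sum (delta \<alpha>) (map hd ps))"
  proof (intro add_left_mono, unfold cyclic_sum_map, rule cyclic_sum_le_detour)
    fix m assume m: "m < length ps"
    let ?m' = "(m + 1) mod length ps"
    have "?m' < length ps" "?m' \<noteq> m" using m assms(2) by (auto simp: mod_Suc)
    with m assms(3,4) show "delta \<alpha> (last (ps!m)) (hd (ps!?m'))
        \<le> delta \<alpha> (last (ps!m)) (hd (ps!m)) + delta \<alpha> (hd (ps!m)) (hd (ps!?m'))"
      by (intro jump_le_detour[OF assms(1)]) auto
  qed
  also have "\<dots> = (\<Sum>p\<leftarrow>ps. cyclic_sum (delta \<alpha>) p) + cyclic_sum (delta \<alpha>) (map hd ps)"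
    using nonempty by (simp add: cyclic_sum_eq_path_sum sum_list_addf[symmetric] cong: map_cong)
  also have "\<dots> \<le> (\<Sum>p\<leftarrow>ps. Delta \<alpha> p) + Delta \<alpha> (map hd ps)"
    using assms(2,3) cyclic_sum_le_Delta[OF assms(1)]
    by (intro add_mono sum_list_mono) (auto simp: Delta_def cyclic_sum_def)
  finally show ?thesis by (simp add: sum_list_sum_nth atLeast0LessThan)
qed

end
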